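(* Let $\mathcal{H}$ be a right quaternionic Hilbert space and $x_1,\dots,x_n,y_1,\dots,y_n\in\mathcal{H}$ unit vectors. Let $g(z)=\sum_{i=0}^\infty a_iz^{2i}$ be analytic in the open complex unit disk with $a_i\in\mathbb{R}$ and $\sum_{i=0}^\infty|a_i|=1$. Then there exist unit vectors $u_1,\dots,u_n,v_1,\dots,v_n$ in a right quaternionic Hilbert space $\mathcal{H}'$ such that $\langle x_i,y_j\rangle\,g(|\langle x_i,y_j\rangle|)=\langle u_i,v_j\rangle$ for all $i,j=1,\dots,n$.
   Context: A right quaternionic Hilbert space is a right $\mathbb{H}$-vector space with inner product satisfying $\langle y,x\rangle=\overline{\langle x,y\rangle}$, $\langle xa+yb,z\rangle=\bar a\langle x,z\rangle+\bar b\langle y,z\rangle$, $\langle z,xa+yb\rangle=\langle z,x\rangle a+\langle z,y\rangle b$, $\langle x,x\rangle>0$ for $x\ne0$. *)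

theory Defs
  imports "HOL-Analysis.Analysis"
begin

datatype quat = Quat (qRe: real) (qI: real) (qJ: real) (qK: real)

definition qzero :: quat where "qzero = Quat 0 0 0 0"
definition qone :: quat where "qone = Quat 1 0 0 0"
definition qof_real :: "real \<Rightarrow> quat" where "qof_real r = Quat r 0 0 0"

definition qadd :: "quat \<Rightarrow> quat \<Rightarrow> quat" where
  "qadd p q = Quat (qRe p + qRe q) (qI p + qI q) (qJ p + qJ q) (qK p + qK q)"

definition qmul :: "quat \<Rightarrow> quat \<Rightarrow> quat" where
  "qmul p q = Quat
     (qRe p * qRe q - qI p * qI q - qJ p * qJ q - qK p * qK q)
     (qRe p * qI q + qI p * qRe q + qJ p * qK q - qK p * qJ q)
     (qRe p * qJ q - qI p * qK q + qJ p * qRe q + qK p * qI q)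
     (qRe p * qK q + qI p * qJ q - qJ p * qI q + qK p * qRe q)"

definition qcnj :: "quat \<Rightarrow> quat" where
  "qcnj q = Quat (qRe q) (- qI q) (- qJ q) (- qK q)"

definition qabs :: "quat \<Rightarrow> real" where
  "qabs q = sqrt ((qRe q)\<^sup>2 + (qI q)\<^sup>2 + (qJ q)\<^sup>2 + (qK q)\<^sup>2)"

definition qpos :: "quat \<Rightarrow> bool" where
  "qpos q \<longleftrightarrow> qRe q > 0 \<and> qI q = 0 \<and> qJ q = 0 \<and> qK q = 0"

record 'v rqhs =
  vcarrier :: "'v set"
  vadd :: "'v \<Rightarrow> 'v \<Rightarrow> 'v"
  vzero :: "'v"
  vsmul :: "'v \<Rightarrow> quat \<Rightarrow> 'v"   \<comment> \<open>right scalar multiplication \<open>x a\<close>\<close>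
  vinner :: "'v \<Rightarrow> 'v \<Rightarrow> quat"

definition rqhs_norm :: "'v rqhs \<Rightarrow> 'v \<Rightarrow> real" where
  "rqhs_norm H x = sqrt (qRe (vinner H x x))"

definition rqhs_diff :: "'v rqhs \<Rightarrow> 'v \<Rightarrow> 'v \<Rightarrow> 'v" where
  "rqhs_diff H x y = vadd H x (vsmul H y (qof_real (-1)))"

definition right_quat_vector_space :: "'v rqhs \<Rightarrow> bool" where
  "right_quat_vector_space H \<longleftrightarrow>
     vzero H \<in> vcarrier H \<and>
     (\<forall>x\<in>vcarrier H. \<forall>y\<in>vcarrier H. vadd H x y \<in> vcarrier H) \<and>
     (\<forall>x\<in>vcarrier H. \<forall>a. vsmul H x a \<in> vcarrier H) \<and>
     (\<forall>x\<in>vcarrier H. \<forall>y\<in>vcarrier H. \<forall>z\<in>vcarrier H.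
         vadd H (vadd H x y) z = vadd H x (vadd H y z)) \<and>
     (\<forall>x\<in>vcarrier H. \<forall>y\<in>vcarrier H. vadd H x y = vadd H y x) \<and>
     (\<forall>x\<in>vcarrier H. vadd H x (vzero H) = x) \<and>
     (\<forall>x\<in>vcarrier H. \<exists>y\<in>vcarrier H. vadd H x y = vzero H) \<and>
     (\<forall>x\<in>vcarrier H. \<forall>a b. vsmul H x (qmul a b) = vsmul H (vsmul H x a) b) \<and>
     (\<forall>x\<in>vcarrier H. vsmul H x qone = x) \<and>
     (\<forall>x\<in>vcarrier H. \<forall>y\<in>vcarrier H. \<forall>a.
         vsmul H (vadd H x y) a = vadd H (vsmul H x a) (vsmul H y a)) \<and>
     (\<forall>x\<in>vcarrier H. \<forall>a b. vsmul H x (qadd a b) = vadd H (vsmul H x a) (vsmul H x b))"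

definition quat_inner_product :: "'v rqhs \<Rightarrow> bool" where
  "quat_inner_product H \<longleftrightarrow>
     (\<forall>x\<in>vcarrier H. \<forall>y\<in>vcarrier H. vinner H y x = qcnj (vinner H x y)) \<and>
     (\<forall>x\<in>vcarrier H. \<forall>y\<in>vcarrier H. \<forall>z\<in>vcarrier H. \<forall>a b.
        vinner H (vadd H (vsmul H x a) (vsmul H y b)) z
          = qadd (qmul (qcnj a) (vinner H x z)) (qmul (qcnj b) (vinner H y z))) \<and>
     (\<forall>x\<in>vcarrier H. \<forall>y\<in>vcarrier H. \<forall>z\<in>vcarrier H. \<forall>a b.
        vinner H z (vadd H (vsmul H x a) (vsmul H y b))
          = qadd (qmul (vinner H z x) a) (qmul (vinner H z y) b)) \<and>
     (\<forall>x\<in>vcarrier H. x \<noteq> vzero H \<longrightarrow> qpos (vinner H x x))"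

definition rqhs_complete :: "'v rqhs \<Rightarrow> bool" where
  "rqhs_complete H \<longleftrightarrow>
     (\<forall>s :: nat \<Rightarrow> 'v. (\<forall>k. s k \<in> vcarrier H) \<and>
          (\<forall>e>0. \<exists>N. \<forall>m\<ge>N. \<forall>k\<ge>N. rqhs_norm H (rqhs_diff H (s m) (s k)) < e)
        \<longrightarrow> (\<exists>l\<in>vcarrier H. \<forall>e>0. \<exists>N. \<forall>m\<ge>N. rqhs_norm H (rqhs_diff H (s m) l) < e))"

definition right_quat_hilbert_space :: "'v rqhs \<Rightarrow> bool" where
  "right_quat_hilbert_space H \<longleftrightarrow>
     right_quat_vector_space H \<and> quat_inner_product H \<and> rqhs_complete H"

definition unit_vec :: "'v rqhs \<Rightarrow> 'v \<Rightarrow> bool" where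
  "unit_vec H x \<longleftrightarrow> x \<in> vcarrier H \<and> vinner H x x = qone"

end

(*
  Stack the vectors as w = (x_1, ..., x_n, y_1, ..., y_n). Their Gram matrix K is quaternionic
  positive semidefinite with unit diagonal, hence also the Gram matrix of vectors c_p in H^m.
  Hadamard products of quaternionic psd matrices need not be psd, but |K_pq|^2 is the real inner
  product of the real coordinates of the rank-one matrices c_p c_p^*, i.e. a real Gram matrix, so
  every K o |K|^(2k) is psd. An absolutely convergent combination of these, with weights |a_k| on
  the diagonal blocks and a_k on the x-y block, has unit diagonal and x-y entries
  <x_i, y_j> g(|<x_i, y_j>|); a Cholesky factorisation realises it as the Gram matrix of unit
  vectors in H^(2n).
*)
theory Submission
  imports Defs
begin

section \<open>Quaternions\<close>

lemma quat_eq_iff: "p = q \<longleftrightarrow> qRe p = qRe q \<and> qI p = qI q \<and> qJ p = qJ q \<and> qK p = qK q"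
  by (cases p; cases q) auto

instantiation quat :: real_algebra_1
begin

definition "0 = qzero"
definition "1 = qone"
definition "p + q = qadd p q"
definition "p * q = qmul p q"
definition "- p = Quat (- qRe p) (- qI p) (- qJ p) (- qK p)"
definition "p - q = Quat (qRe p - qRe q) (qI p - qI q) (qJ p - qJ q) (qK p - qK q)"
definition "scaleR r p = Quat (r * qRe p) (r * qI p) (r * qJ p) (r * qK p)"

lemmas quat_ops_defs = zero_quat_def one_quat_def plus_quat_def times_quat_def uminus_quat_def
  minus_quat_def scaleR_quat_def qzero_def qone_def qadd_def qmul_def

instance
  by standard (auto simp: quat_ops_defs quat_eq_iff algebra_simps)

end

lemma quat_components [simp]:
  "qRe 0 = 0" "qI 0 = 0" "qJ 0 = 0" "qK 0 = 0"
  "qRe 1 = 1" "qI 1 = 0" "qJ 1 = 0" "qK 1 = 0"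
  "qRe (p + q) = qRe p + qRe q" "qI (p + q) = qI p + qI q"
  "qJ (p + q) = qJ p + qJ q" "qK (p + q) = qK p + qK q"
  "qRe (p - q) = qRe p - qRe q" "qI (p - q) = qI p - qI q"
  "qJ (p - q) = qJ p - qJ q" "qK (p - q) = qK p - qK q"
  "qRe (- p) = - qRe p" "qI (- p) = - qI p" "qJ (- p) = - qJ p" "qK (- p) = - qK p"
  "qRe (r *\<^sub>R p) = r * qRe p" "qI (r *\<^sub>R p) = r * qI p"
  "qJ (r *\<^sub>R p) = r * qJ p" "qK (r *\<^sub>R p) = r * qK p"
  "qRe (p * q) = qRe p * qRe q - qI p * qI q - qJ p * qJ q - qK p * qK q"
  "qI (p * q) = qRe p * qI q + qI p * qRe q + qJ p * qK q - qK p * qJ q"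
  "qJ (p * q) = qRe p * qJ q - qI p * qK q + qJ p * qRe q + qK p * qI q"
  "qK (p * q) = qRe p * qK q + qI p * qJ q - qJ p * qI q + qK p * qRe q"
  "qRe (of_real r) = r" "qI (of_real r) = 0" "qJ (of_real r) = 0" "qK (of_real r) = 0"
  by (simp_all add: quat_ops_defs of_real_def)

lemma quat_ops_eq: "qmul = (*)" "qadd = (+)" "qone = 1" "qzero = 0" "qof_real = of_real"
  by (auto simp: fun_eq_iff quat_eq_iff qof_real_def quat_ops_defs)

lemma mult_of_real_quat: "(q :: quat) * of_real r = r *\<^sub>R q"
  by (simp add: quat_eq_iff)

lemma qRe_sum: "qRe (sum f A) = (\<Sum>x\<in>A. qRe (f x))"
  by (induction A rule: infinite_finite_induct) auto

lemma qcnj_components [simp]: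
  "qRe (qcnj q) = qRe q" "qI (qcnj q) = - qI q" "qJ (qcnj q) = - qJ q" "qK (qcnj q) = - qK q"
  by (simp_all add: qcnj_def)

lemma qcnj_add [simp]: "qcnj (p + q) = qcnj p + qcnj q"
  and qcnj_diff [simp]: "qcnj (p - q) = qcnj p - qcnj q"
  and qcnj_minus [simp]: "qcnj (- q) = - qcnj q"
  and qcnj_mult [simp]: "qcnj (p * q) = qcnj q * qcnj p"
  and qcnj_qcnj [simp]: "qcnj (qcnj q) = q"
  and qcnj_scaleR [simp]: "qcnj (r *\<^sub>R q) = r *\<^sub>R qcnj q"
  and qcnj_of_real [simp]: "qcnj (of_real r) = of_real r"
  by (simp_all add: quat_eq_iff)

lemma qcnj_0 [simp]: "qcnj 0 = 0" and qcnj_1 [simp]: "qcnj 1 = 1"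
  using qcnj_of_real[of 0] qcnj_of_real[of 1] by simp_all

lemma qcnj_sum: "qcnj (sum f A) = (\<Sum>x\<in>A. qcnj (f x))"
  by (induction A rule: infinite_finite_induct) auto

lemma qcnj_eq_self_iff: "qcnj q = q \<longleftrightarrow> q = of_real (qRe q)"
  by (auto simp: quat_eq_iff)

lemma qabs_sq: "(qabs q)\<^sup>2 = (qRe q)\<^sup>2 + (qI q)\<^sup>2 + (qJ q)\<^sup>2 + (qK q)\<^sup>2"
  by (simp add: qabs_def)

lemma qcnj_mult_self: "qcnj q * q = of_real ((qabs q)\<^sup>2)"
  unfolding qabs_sq by (simp add: quat_eq_iff power2_eq_square algebra_simps)

lemma qabs_nonneg: "0 \<le> qabs q"
  by (simp add: qabs_def)

lemma qabs_qcnj [simp]: "qabs (qcnj q) = qabs q"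
  by (simp add: qabs_def)

lemma qabs_1 [simp]: "qabs 1 = 1"
  by (simp add: qabs_def)

lemma qabs_eq_0_iff: "qabs q = 0 \<longleftrightarrow> q = 0"
  by (simp add: qabs_def quat_eq_iff add_nonneg_eq_0_iff)

lemma of_real_mult_quat: "of_real r * (q :: quat) = r *\<^sub>R q"
  by (simp add: scaleR_conv_of_real)

lemma qRe_mult_commute: "qRe (p * q) = qRe (q * p)"
  by simp

section \<open>Quaternionic positive semidefinite matrices\<close>

definition quat_form :: "nat \<Rightarrow> (nat \<Rightarrow> nat \<Rightarrow> quat) \<Rightarrow> (nat \<Rightarrow> quat) \<Rightarrow> quat" where
  "quat_form m K \<xi> = (\<Sum>p<m. \<Sum>q<m. qcnj (\<xi> p) * K p q * \<xi> q)"

definition quat_psd :: "nat \<Rightarrow> (nat \<Rightarrow> nat \<Rightarrow> quat) \<Rightarrow> bool" where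
  "quat_psd m K \<longleftrightarrow> (\<forall>p<m. \<forall>q<m. K q p = qcnj (K p q)) \<and> (\<forall>\<xi>. 0 \<le> qRe (quat_form m K \<xi>))"

lemma quat_psd_hermitian: "quat_psd m K \<Longrightarrow> p < m \<Longrightarrow> q < m \<Longrightarrow> K q p = qcnj (K p q)"
  unfolding quat_psd_def by blast

lemma quat_psd_form_nonneg: "quat_psd m K \<Longrightarrow> 0 \<le> qRe (quat_form m K \<xi>)"
  unfolding quat_psd_def by blast

lemma quat_psd_cong:
  assumes psd: "quat_psd m K" and eq: "\<And>p q. p < m \<Longrightarrow> q < m \<Longrightarrow> K' p q = K p q"
  shows "quat_psd m K'"
  unfolding quat_psd_def
proof (intro conjI allI impI)
  fix p q assume "p < m" "q < m"
  then show "K' q p = qcnj (K' p q)"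
    using quat_psd_hermitian[OF psd \<open>p < m\<close> \<open>q < m\<close>] eq by simp
next
  fix \<xi>
  have "quat_form m K' \<xi> = quat_form m K \<xi>"
    unfolding quat_form_def using eq by (intro sum.cong refl) simp
  then show "0 \<le> qRe (quat_form m K' \<xi>)"
    using quat_psd_form_nonneg[OF psd] by simp
qed

lemma quat_form_supported:
  assumes "A \<subseteq> {..<m}" "\<And>l. l \<notin> A \<Longrightarrow> \<xi> l = 0"
  shows "quat_form m K \<xi> = (\<Sum>p\<in>A. \<Sum>q\<in>A. qcnj (\<xi> p) * K p q * \<xi> q)"
proof -
  have "(\<Sum>q<m. qcnj (\<xi> p) * K p q * \<xi> q) = (\<Sum>q\<in>A. qcnj (\<xi> p) * K p q * \<xi> q)" for p
    by (rule sum.mono_neutral_right) (use assms in auto)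
  moreover have "(\<Sum>p<m. \<Sum>q\<in>A. qcnj (\<xi> p) * K p q * \<xi> q) = (\<Sum>p\<in>A. \<Sum>q\<in>A. qcnj (\<xi> p) * K p q * \<xi> q)"
    by (rule sum.mono_neutral_right) (use assms in auto)
  ultimately show ?thesis
    unfolding quat_form_def by simp
qed

lemma quat_form_two_points:
  assumes "p < m" "q < m" "p \<noteq> q"
  shows "quat_form m K (\<lambda>l. if l = p then \<alpha> else if l = q then \<beta> else 0)
    = qcnj \<alpha> * K p p * \<alpha> + qcnj \<alpha> * K p q * \<beta> + qcnj \<beta> * K q p * \<alpha> + qcnj \<beta> * K q q * \<beta>"
  using assms by (subst quat_form_supported[where A = "{p, q}"]) auto

lemma quat_psd_diag:
  assumes "quat_psd m K" "p < m"
  shows "K p p = of_real (qRe (K p p))" "0 \<le> qRe (K p p)"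
proof -
  show "K p p = of_real (qRe (K p p))"
    using qcnj_eq_self_iff quat_psd_hermitian[OF assms(1,2,2), symmetric] by blast
  have "quat_form m K (\<lambda>l. if l = p then 1 else 0) = K p p"
    using assms(2) by (subst quat_form_supported[where A = "{p}"]) auto
  then show "0 \<le> qRe (K p p)"
    using quat_psd_form_nonneg[OF assms(1)] by metis
qed

lemma quat_psd_zero_diag_row:
  assumes psd: "quat_psd m K" and "p < m" "q < m" and zero: "qRe (K p p) = 0"
  shows "K p q = 0"
proof (rule ccontr)
  assume nz: "K p q \<noteq> 0"
  define k where "k = K p q"
  have Kpp: "K p p = 0"
    using quat_psd_diag(1)[OF psd \<open>p < m\<close>] unfolding zero by simp
  with nz have "p \<noteq> q"
    by auto
  have "0 \<le> qRe (K q q) - 2 * t * (qabs k)\<^sup>2" for t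
  proof -
    have "0 \<le> qRe (quat_form m K (\<lambda>l. if l = p then - (of_real t * k) else if l = q then 1 else 0))"
      by (rule quat_psd_form_nonneg[OF psd])
    also have "\<dots> = qRe (K q q) - 2 * t * (qabs k)\<^sup>2"
      unfolding quat_form_two_points[OF \<open>p < m\<close> \<open>q < m\<close> \<open>p \<noteq> q\<close>] Kpp
        quat_psd_hermitian[OF psd \<open>p < m\<close> \<open>q < m\<close>] k_def[symmetric] qabs_sq
      by (simp add: power2_eq_square algebra_simps)
    finally show ?thesis .
  qed
  from this[of "(qRe (K q q) + 1) / (qabs k)\<^sup>2"] show False
    using nz quat_psd_diag(2)[OF psd \<open>q < m\<close>] by (simp add: k_def qabs_eq_0_iff)
qed

lemma quat_psd_unit_diag_abs_le_1:
  assumes psd: "quat_psd m K" and "p < m" "q < m" and diag: "K p p = 1" "K q q = 1"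
  shows "qabs (K p q) \<le> 1"
proof (cases "p = q")
  case True
  then show ?thesis using diag by simp
next
  case False
  have "0 \<le> qRe (quat_form m K (\<lambda>l. if l = p then - K p q else if l = q then 1 else 0))"
    by (rule quat_psd_form_nonneg[OF psd])
  also have "\<dots> = 1 - (qabs (K p q))\<^sup>2"
    unfolding quat_form_two_points[OF \<open>p < m\<close> \<open>q < m\<close> False] diag
      quat_psd_hermitian[OF psd \<open>p < m\<close> \<open>q < m\<close>] qabs_sq
    by (simp add: power2_eq_square algebra_simps)
  finally show ?thesis
    by (simp add: abs_square_le_1 qabs_nonneg)
qed

section \<open>Gram matrices in quaternionic inner product spaces\<close>

context
  fixes H :: "'v rqhs"
  assumes vs: "right_quat_vector_space H" and ip: "quat_inner_product H"
begin

lemma vadd_closed: "x \<in> vcarrier H \<Longrightarrow> y \<in> vcarrier H \<Longrightarrow> vadd H x y \<in> vcarrier H"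
  and vsmul_closed: "x \<in> vcarrier H \<Longrightarrow> vsmul H x a \<in> vcarrier H"
  and vzero_closed: "vzero H \<in> vcarrier H"
  and vadd_vzero: "x \<in> vcarrier H \<Longrightarrow> vadd H x (vzero H) = x"
  and vsmul_one: "x \<in> vcarrier H \<Longrightarrow> vsmul H x 1 = x"
  using vs unfolding right_quat_vector_space_def quat_ops_eq by simp_all

lemma vinner_commute: "x \<in> vcarrier H \<Longrightarrow> y \<in> vcarrier H \<Longrightarrow> vinner H y x = qcnj (vinner H x y)"
  using ip unfolding quat_inner_product_def by blast

lemma vinner_lincomb_left:
  "x \<in> vcarrier H \<Longrightarrow> y \<in> vcarrier H \<Longrightarrow> z \<in> vcarrier H \<Longrightarrow>
   vinner H (vadd H (vsmul H x a) (vsmul H y b)) z = qcnj a * vinner H x z + qcnj b * vinner H y z"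
  using ip unfolding quat_inner_product_def quat_ops_eq by blast

lemma vinner_add_left:
  "x \<in> vcarrier H \<Longrightarrow> y \<in> vcarrier H \<Longrightarrow> z \<in> vcarrier H \<Longrightarrow>
   vinner H (vadd H x y) z = vinner H x z + vinner H y z"
  using vinner_lincomb_left[of x y z 1 1] by (simp add: vsmul_one)

lemma vinner_vzero_left:
  assumes "z \<in> vcarrier H"
  shows "vinner H (vzero H) z = 0"
proof -
  have "vinner H (vzero H) z = vinner H (vzero H) z + vinner H (vzero H) z"
    using vinner_add_left[OF vzero_closed vzero_closed assms] by (simp only: vadd_vzero[OF vzero_closed])
  then show ?thesis
    by simp
qed

lemma vinner_vsmul_left:
  assumes "x \<in> vcarrier H" "z \<in> vcarrier H"
  shows "vinner H (vsmul H x a) z = qcnj a * vinner H x z"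
proof -
  have "vsmul H x a = vadd H (vsmul H x a) (vsmul H (vzero H) 1)"
    by (simp add: assms vsmul_one vzero_closed vadd_vzero vsmul_closed)
  then show ?thesis
    using vinner_lincomb_left[OF assms(1) vzero_closed assms(2), of a 1]
    by (simp add: vinner_vzero_left assms(2))
qed

lemma vinner_self_nonneg:
  assumes "x \<in> vcarrier H"
  shows "0 \<le> qRe (vinner H x x)"
proof (cases "x = vzero H")
  case True
  then show ?thesis
    by (simp add: vinner_vzero_left vzero_closed)
next
  case False
  then have "qpos (vinner H x x)"
    using ip assms unfolding quat_inner_product_def by blast
  then show ?thesis
    by (simp add: qpos_def)
qed

primrec vlincomb :: "(nat \<Rightarrow> 'v) \<Rightarrow> (nat \<Rightarrow> quat) \<Rightarrow> nat \<Rightarrow> 'v" where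
  "vlincomb w \<xi> 0 = vzero H"
| "vlincomb w \<xi> (Suc k) = vadd H (vlincomb w \<xi> k) (vsmul H (w k) (\<xi> k))"

lemma vlincomb_closed: "(\<And>p. p < k \<Longrightarrow> w p \<in> vcarrier H) \<Longrightarrow> vlincomb w \<xi> k \<in> vcarrier H"
  by (induction k) (auto intro: vzero_closed vadd_closed vsmul_closed)

lemma vinner_vlincomb_left:
  "(\<And>p. p < k \<Longrightarrow> w p \<in> vcarrier H) \<Longrightarrow> z \<in> vcarrier H \<Longrightarrow>
   vinner H (vlincomb w \<xi> k) z = (\<Sum>p<k. qcnj (\<xi> p) * vinner H (w p) z)"
  by (induction k)
    (simp_all add: vinner_vzero_left vinner_add_left vinner_vsmul_left vlincomb_closed vsmul_closed)

lemma vinner_vlincomb_right: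
  assumes w: "\<And>p. p < k \<Longrightarrow> w p \<in> vcarrier H" and z: "z \<in> vcarrier H"
  shows "vinner H z (vlincomb w \<xi> k) = (\<Sum>p<k. vinner H z (w p) * \<xi> p)"
proof -
  have "vinner H z (vlincomb w \<xi> k) = qcnj (vinner H (vlincomb w \<xi> k) z)"
    by (rule vinner_commute[OF vlincomb_closed[OF w] z])
  also have "\<dots> = (\<Sum>p<k. vinner H z (w p) * \<xi> p)"
    using w z by (simp add: vinner_vlincomb_left qcnj_sum vinner_commute[symmetric])
  finally show ?thesis .
qed

lemma gram_matrix_quat_psd:
  assumes w: "\<And>p. p < m \<Longrightarrow> w p \<in> vcarrier H"
  shows "quat_psd m (\<lambda>p q. vinner H (w p) (w q))"
  unfolding quat_psd_def
proof (intro conjI allI impI)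
  fix p q assume "p < m" "q < m"
  then show "vinner H (w q) (w p) = qcnj (vinner H (w p) (w q))"
    using vinner_commute w by blast
next
  fix \<xi>
  have "vinner H (vlincomb w \<xi> m) (vlincomb w \<xi> m)
      = (\<Sum>p<m. qcnj (\<xi> p) * vinner H (w p) (vlincomb w \<xi> m))"
    by (rule vinner_vlincomb_left[OF w vlincomb_closed[OF w]])
  also have "\<dots> = quat_form m (\<lambda>p q. vinner H (w p) (w q)) \<xi>"
    using w by (simp add: vinner_vlincomb_right quat_form_def sum_distrib_left mult.assoc)
  moreover have "vlincomb w \<xi> m \<in> vcarrier H"
    by (rule vlincomb_closed[OF w])
  ultimately show "0 \<le> qRe (quat_form m (\<lambda>p q. vinner H (w p) (w q)) \<xi>)"
    using vinner_self_nonneg by metis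
qed

end

section \<open>The Hilbert space of quaternionic \<open>m\<close>-tuples\<close>

definition quat_space :: "nat \<Rightarrow> (nat \<Rightarrow> quat) rqhs" where
  "quat_space m = \<lparr>vcarrier = {f. \<forall>l\<ge>m. f l = 0}, vadd = (\<lambda>f g l. f l + g l), vzero = (\<lambda>l. 0),
     vsmul = (\<lambda>f a l. f l * a), vinner = (\<lambda>f g. \<Sum>l<m. qcnj (f l) * g l)\<rparr>"

lemma quat_space_simps [simp]:
  "vcarrier (quat_space m) = {f. \<forall>l\<ge>m. f l = 0}"
  "vadd (quat_space m) = (\<lambda>f g l. f l + g l)"
  "vzero (quat_space m) = (\<lambda>l. 0)"
  "vsmul (quat_space m) = (\<lambda>f a l. f l * a)"
  "vinner (quat_space m) = (\<lambda>f g. \<Sum>l<m. qcnj (f l) * g l)"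
  by (simp_all add: quat_space_def)

lemma quat_space_vector_space: "right_quat_vector_space (quat_space m)"
proof -
  have "\<exists>y\<in>vcarrier (quat_space m). vadd (quat_space m) x y = vzero (quat_space m)"
    if "x \<in> vcarrier (quat_space m)" for x
    using that by (intro bexI[where x = "\<lambda>l. - x l"]) auto
  then show ?thesis
    unfolding right_quat_vector_space_def quat_ops_eq by (auto simp: fun_eq_iff algebra_simps)
qed

lemma quat_space_inner_product: "quat_inner_product (quat_space m)"
proof -
  have "qpos (vinner (quat_space m) x x)"
    if x: "x \<in> vcarrier (quat_space m)" and nz: "x \<noteq> vzero (quat_space m)" for x
  proof -
    obtain l where "x l \<noteq> 0"
      using nz by auto
    with x have "l < m" "0 < (qabs (x l))\<^sup>2"
      by (auto simp: not_le[symmetric] qabs_eq_0_iff)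
    then have "0 < (\<Sum>l<m. (qabs (x l))\<^sup>2)"
      by (intro sum_pos2[of _ l]) auto
    moreover have "vinner (quat_space m) x x = of_real (\<Sum>l<m. (qabs (x l))\<^sup>2)"
      by (simp add: qcnj_mult_self del: of_real_power flip: of_real_sum)
    ultimately show ?thesis
      by (simp add: qpos_def del: of_real_sum of_real_power)
  qed
  then show ?thesis
    unfolding quat_inner_product_def quat_ops_eq
    by (simp add: qcnj_sum sum_distrib_left sum_distrib_right sum.distrib algebra_simps)
qed

definition quat_to_vec :: "quat \<Rightarrow> (real \<times> real) \<times> (real \<times> real)" where
  "quat_to_vec q = ((qRe q, qI q), (qJ q, qK q))"

lemma dist_quat_to_vec: "dist (quat_to_vec p) (quat_to_vec q) = qabs (p - q)"
  by (simp add: quat_to_vec_def dist_norm norm_Pair qabs_def add.assoc)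

definition vec_to_quat :: "(real \<times> real) \<times> (real \<times> real) \<Rightarrow> quat" where
  "vec_to_quat v = Quat (fst (fst v)) (snd (fst v)) (fst (snd v)) (snd (snd v))"

lemma quat_to_vec_inverse: "quat_to_vec (vec_to_quat v) = v"
  by (simp add: quat_to_vec_def vec_to_quat_def)

lemma quat_space_norm_diff:
  "rqhs_norm (quat_space m) (rqhs_diff (quat_space m) f g) = sqrt (\<Sum>l<m. (qabs (f l - g l))\<^sup>2)"
proof -
  have diff: "rqhs_diff (quat_space m) f g = (\<lambda>l. f l - g l)"
    by (simp add: rqhs_diff_def quat_ops_eq fun_eq_iff quat_eq_iff)
  show ?thesis
    by (simp only: rqhs_norm_def diff quat_space_simps qRe_sum qcnj_mult_self quat_components)
qed

text \<open>A Cauchy sequence in \<open>quat_space m\<close> is Cauchy in each of its \<open>m\<close> coordinates, and these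
  converge because \<^term>\<open>quat_to_vec\<close> is an isometry onto a complete space.\<close>
lemma quat_space_coord_cauchy:
  fixes s :: "nat \<Rightarrow> nat \<Rightarrow> quat"
  assumes cauchy: "\<forall>e>0. \<exists>N. \<forall>a\<ge>N. \<forall>b\<ge>N. sqrt (\<Sum>l<m. (qabs (s a l - s b l))\<^sup>2) < e"
    and "l < m"
  shows "Cauchy (\<lambda>k. quat_to_vec (s k l))"
proof (rule metric_CauchyI)
  fix e :: real assume "0 < e"
  then obtain N where N: "\<forall>a\<ge>N. \<forall>b\<ge>N. sqrt (\<Sum>l<m. (qabs (s a l - s b l))\<^sup>2) < e"
    using cauchy by blast
  have "dist (quat_to_vec (s a l)) (quat_to_vec (s b l)) < e" if "N \<le> a" "N \<le> b" for a b
  proof -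
    have "dist (quat_to_vec (s a l)) (quat_to_vec (s b l)) = qabs (s a l - s b l)"
      by (rule dist_quat_to_vec)
    also have "\<dots> \<le> sqrt (\<Sum>l<m. (qabs (s a l - s b l))\<^sup>2)"
      using \<open>l < m\<close> by (intro real_le_rsqrt member_le_sum) auto
    also have "\<dots> < e"
      using N that by blast
    finally show ?thesis .
  qed
  then show "\<exists>N. \<forall>a\<ge>N. \<forall>b\<ge>N. dist (quat_to_vec (s a l)) (quat_to_vec (s b l)) < e"
    by blast
qed

lemma quat_space_complete: "rqhs_complete (quat_space m)"
  unfolding rqhs_complete_def quat_space_norm_diff
proof (intro allI impI, elim conjE)
  fix s :: "nat \<Rightarrow> nat \<Rightarrow> quat"
  assume cauchy: "\<forall>e>0. \<exists>N. \<forall>a\<ge>N. \<forall>b\<ge>N. sqrt (\<Sum>l<m. (qabs (s a l - s b l))\<^sup>2) < e"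
  define L where "L l = (if l < m then vec_to_quat (lim (\<lambda>k. quat_to_vec (s k l))) else 0)" for l
  have "(\<lambda>k. qabs (s k l - L l)) \<longlonglongrightarrow> 0" if "l < m" for l
  proof -
    have "(\<lambda>k. quat_to_vec (s k l)) \<longlonglongrightarrow> lim (\<lambda>k. quat_to_vec (s k l))"
      using Cauchy_convergent[OF quat_space_coord_cauchy[OF cauchy that]] by (simp only: convergent_LIMSEQ_iff)
    moreover have "lim (\<lambda>k. quat_to_vec (s k l)) = quat_to_vec (L l)"
      using that by (simp add: L_def quat_to_vec_inverse)
    ultimately have "(\<lambda>k. quat_to_vec (s k l)) \<longlonglongrightarrow> quat_to_vec (L l)"
      by simp
    from tendsto_dist_iff[THEN iffD1, OF this] show ?thesis
      by (simp add: dist_quat_to_vec)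
  qed
  then have "(\<lambda>k. sqrt (\<Sum>l<m. (qabs (s k l - L l))\<^sup>2)) \<longlonglongrightarrow> sqrt (\<Sum>l<m. 0\<^sup>2)"
    by (intro tendsto_intros) auto
  then have "\<forall>e>0. \<exists>N. \<forall>k\<ge>N. sqrt (\<Sum>l<m. (qabs (s k l - L l))\<^sup>2) < e"
    by (simp add: lim_sequentially abs_of_nonneg sum_nonneg)
  moreover have "L \<in> vcarrier (quat_space m)"
    by (simp add: L_def)
  ultimately show "\<exists>L\<in>vcarrier (quat_space m). \<forall>e>0. \<exists>N. \<forall>k\<ge>N. sqrt (\<Sum>l<m. (qabs (s k l - L l))\<^sup>2) < e"
    by blast
qed


lemma quat_space_hilbert_space: "right_quat_hilbert_space (quat_space m)"
  using quat_space_vector_space quat_space_inner_product quat_space_complete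
  unfolding right_quat_hilbert_space_def by blast

section \<open>Cholesky factorisation\<close>

lemma quat_form_diff:
  "quat_form m (\<lambda>p q. A p q - B p q) \<xi> = quat_form m A \<xi> - quat_form m B \<xi>"
  by (simp add: quat_form_def algebra_simps sum_subtractf)

lemma quat_form_rank_one:
  "quat_form m (\<lambda>p q. u p * c * v q) \<xi> = (\<Sum>p<m. qcnj (\<xi> p) * u p) * c * (\<Sum>q<m. v q * \<xi> q)"
  by (simp add: quat_form_def sum_distrib_left sum_distrib_right mult.assoc) (rule sum.swap)

lemma quat_form_Suc:
  "quat_form (Suc m) K \<zeta> = qcnj (\<zeta> 0) * K 0 0 * \<zeta> 0 + qcnj (\<zeta> 0) * (\<Sum>q<m. K 0 (Suc q) * \<zeta> (Suc q))
     + (\<Sum>p<m. qcnj (\<zeta> (Suc p)) * K (Suc p) 0) * \<zeta> 0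
     + quat_form m (\<lambda>p q. K (Suc p) (Suc q)) (\<lambda>l. \<zeta> (Suc l))"
  unfolding quat_form_def sum.lessThan_Suc_shift
  by (simp add: sum.distrib sum_distrib_left sum_distrib_right mult.assoc add_ac del: sum.lessThan_Suc)

text \<open>A vanishing pivot \<open>K 0 0\<close> makes the factor \<open>1 / 0 = 0\<close>; this is harmless, since row \<open>0\<close>
  of a psd matrix then vanishes.\<close>
definition schur_complement :: "(nat \<Rightarrow> nat \<Rightarrow> quat) \<Rightarrow> nat \<Rightarrow> nat \<Rightarrow> quat" where
  "schur_complement K p q = K (Suc p) (Suc q) - K (Suc p) 0 * of_real (1 / qRe (K 0 0)) * K 0 (Suc q)"

lemma quat_psd_schur_complement:
  assumes psd: "quat_psd (Suc m) K"
  shows "quat_psd m (schur_complement K)"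
  unfolding quat_psd_def
proof (intro conjI allI impI)
  fix p q assume "p < m" "q < m"
  then show "schur_complement K q p = qcnj (schur_complement K p q)"
    using quat_psd_hermitian[OF psd, of "Suc p" "Suc q"] quat_psd_hermitian[OF psd, of 0 "Suc q"]
      quat_psd_hermitian[OF psd, of "Suc p" 0]
    by (simp add: schur_complement_def mult.assoc)
next
  fix \<xi> :: "nat \<Rightarrow> quat"
  define d where "d = qRe (K 0 0)"
  define b where "b = (\<Sum>q<m. K 0 (Suc q) * \<xi> q)"
  have K00: "K 0 0 = of_real d"
    using quat_psd_diag(1)[OF psd] by (simp add: d_def)
  have column: "(\<Sum>p<m. qcnj (\<xi> p) * K (Suc p) 0) = qcnj b"
    unfolding b_def qcnj_sum by (intro sum.cong refl) (simp add: quat_psd_hermitian[OF psd, of 0 "Suc _"])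
  have pivot: "1 / d * (d * (1 / d)) = 1 / d"
    by (cases "d = 0") simp_all
  have "quat_form (Suc m) K (case_nat (- (of_real (1 / d) * b)) \<xi>)
      = quat_form m (\<lambda>p q. K (Suc p) (Suc q)) \<xi> - qcnj b * of_real (1 / d) * b"
    unfolding quat_form_Suc K00
    by (simp add: column b_def[symmetric] mult_of_real_quat of_real_mult_quat pivot)
  also have "\<dots> = quat_form m (schur_complement K) \<xi>"
    unfolding schur_complement_def quat_form_diff quat_form_rank_one column b_def d_def ..
  finally show "0 \<le> qRe (quat_form m (schur_complement K) \<xi>)"
    using quat_psd_form_nonneg[OF psd] by metis
qed

definition cholesky_row :: "(nat \<Rightarrow> nat \<Rightarrow> quat) \<Rightarrow> nat \<Rightarrow> quat" where
  "cholesky_row K p = of_real (1 / sqrt (qRe (K 0 0))) * K 0 p"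

lemma quat_psd_cholesky_step:
  assumes psd: "quat_psd (Suc m) K" and "p < Suc m" "q < Suc m"
  shows "K p q = qcnj (cholesky_row K p) * cholesky_row K q
    + (if p = 0 \<or> q = 0 then 0 else schur_complement K (p - 1) (q - 1))"
proof -
  define d where "d = qRe (K 0 0)"
  have d: "0 \<le> d" "K 0 0 = of_real d"
    using quat_psd_diag[OF psd, of 0] by (simp_all add: d_def)
  have "1 / sqrt d * (1 / sqrt d) = 1 / d"
    using d(1) by (simp add: real_sqrt_mult[symmetric])
  then have outer: "qcnj (cholesky_row K p) * cholesky_row K q = K p 0 * of_real (1 / d) * K 0 q"
    using quat_psd_hermitian[OF psd _ \<open>p < Suc m\<close>, of 0]
    by (simp add: cholesky_row_def d_def[symmetric] mult.assoc mult_of_real_quat of_real_mult_quat)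
  show ?thesis
  proof (cases "p = 0 \<or> q = 0")
    case False
    then show ?thesis
      unfolding outer by (simp add: schur_complement_def d_def)
  next
    case True
    have "K p 0 * of_real (1 / d) * K 0 q = K p q"
    proof (cases "d = 0")
      case True
      then have "K 0 l = 0" "K l 0 = 0" if "l < Suc m" for l
        using quat_psd_zero_diag_row[OF psd _ that, of 0] quat_psd_hermitian[OF psd _ that, of 0]
        by (simp_all add: d_def)
      with assms(2,3) \<open>p = 0 \<or> q = 0\<close> show ?thesis
        by auto
    next
      case False
      with \<open>p = 0 \<or> q = 0\<close> show ?thesis
        by (auto simp: d(2) mult_of_real_quat of_real_mult_quat)
    qed
    with True show ?thesis
      unfolding outer by simp
  qed
qed

lemma quat_psd_gram_factorization:
  "quat_psd m K \<Longrightarrow> \<exists>c. \<forall>p<m. \<forall>q<m. (\<Sum>l<m. qcnj (c p l) * c q l) = K p q"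
proof (induction m arbitrary: K)
  case 0
  then show ?case by simp
next
  case (Suc m)
  obtain c where c: "\<And>p q. p < m \<Longrightarrow> q < m \<Longrightarrow> (\<Sum>l<m. qcnj (c p l) * c q l) = schur_complement K p q"
    using Suc.IH[OF quat_psd_schur_complement[OF Suc.prems]] by blast
  define c' where "c' p l = (case l of 0 \<Rightarrow> cholesky_row K p | Suc l' \<Rightarrow> if p = 0 then 0 else c (p - 1) l')"
    for p l
  have "(\<Sum>l<Suc m. qcnj (c' p l) * c' q l) = K p q" if "p < Suc m" "q < Suc m" for p q
    using that unfolding sum.lessThan_Suc_shift quat_psd_cholesky_step[OF Suc.prems that]
    by (auto simp: c'_def c)
  then show ?case by blast
qed

lemma quat_psd_is_gram_matrix:
  assumes "quat_psd m K"
  obtains u where "\<And>p. u p \<in> vcarrier (quat_space m)"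
    and "\<And>p q. p < m \<Longrightarrow> q < m \<Longrightarrow> vinner (quat_space m) (u p) (u q) = K p q"
proof -
  obtain c where c: "\<And>p q. p < m \<Longrightarrow> q < m \<Longrightarrow> (\<Sum>l<m. qcnj (c p l) * c q l) = K p q"
    using quat_psd_gram_factorization[OF assms] by blast
  show ?thesis
    by (rule that[of "\<lambda>p l. if l < m then c p l else 0"]) (simp_all add: c)
qed

section \<open>Schur products with real Gram matrices\<close>

lemma qRe_quat_form_mult_real:
  "qRe (quat_form m (\<lambda>p q. K p q * of_real (R p q)) \<xi>)
     = (\<Sum>p<m. \<Sum>q<m. R p q * qRe (qcnj (\<xi> p) * K p q * \<xi> q))"
  by (simp add: quat_form_def qRe_sum mult_of_real_quat)

text \<open>The second factor has to be real: the Hadamard product of two quaternionic psd matrices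
  need not be psd.\<close>
lemma quat_psd_mult_real_gram:
  assumes psd: "quat_psd m K" and "finite B"
    and R: "\<And>p q. p < m \<Longrightarrow> q < m \<Longrightarrow> R p q = (\<Sum>\<beta>\<in>B. f \<beta> p * f \<beta> q)"
  shows "quat_psd m (\<lambda>p q. K p q * of_real (R p q))"
  unfolding quat_psd_def
proof (intro conjI allI impI)
  fix p q assume "p < m" "q < m"
  then have "R q p = R p q"
    using R by (simp add: mult.commute)
  then show "K q p * of_real (R q p) = qcnj (K p q * of_real (R p q))"
    using quat_psd_hermitian[OF psd \<open>p < m\<close> \<open>q < m\<close>] by (simp add: mult_of_real_quat)
next
  fix \<xi> :: "nat \<Rightarrow> quat"
  have "quat_form m (\<lambda>p q. K p q * of_real (R p q)) \<xi>
      = (\<Sum>p<m. \<Sum>q<m. \<Sum>\<beta>\<in>B. qcnj (f \<beta> p *\<^sub>R \<xi> p) * K p q * (f \<beta> q *\<^sub>R \<xi> q))"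
    unfolding quat_form_def
    by (intro sum.cong refl)
      (simp add: R mult_of_real_quat scaleR_sum_left sum_distrib_left sum_distrib_right mult.commute
        del: of_real_sum)
  also have "\<dots> = (\<Sum>\<beta>\<in>B. quat_form m K (\<lambda>p. f \<beta> p *\<^sub>R \<xi> p))"
    unfolding quat_form_def by (simp only: sum.swap[of _ B "{..<m}"])
  finally have "qRe (quat_form m (\<lambda>p q. K p q * of_real (R p q)) \<xi>)
      = (\<Sum>\<beta>\<in>B. qRe (quat_form m K (\<lambda>p. f \<beta> p *\<^sub>R \<xi> p)))"
    by (simp add: qRe_sum)
  also have "\<dots> \<ge> 0"
    by (intro sum_nonneg quat_psd_form_nonneg[OF psd])
  finally show "0 \<le> qRe (quat_form m (\<lambda>p q. K p q * of_real (R p q)) \<xi>)" .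
qed

definition quat_coord :: "nat \<Rightarrow> quat \<Rightarrow> real" where
  "quat_coord \<alpha> q = (if \<alpha> = 0 then qRe q else if \<alpha> = 1 then qI q else if \<alpha> = 2 then qJ q else qK q)"

lemma qRe_mult_qcnj_eq_coords: "qRe (p * qcnj q) = (\<Sum>\<alpha><4. quat_coord \<alpha> p * quat_coord \<alpha> q)"
  by (simp add: quat_coord_def eval_nat_numeral)

definition outer_coord :: "nat \<times> nat \<times> nat \<Rightarrow> (nat \<Rightarrow> quat) \<Rightarrow> real" where
  "outer_coord \<beta> c = (case \<beta> of (l, l', \<alpha>) \<Rightarrow> quat_coord \<alpha> (c l * qcnj (c l')))"

text \<open>\<open>|\<langle>c, d\<rangle>|\<^sup>2 = Re tr ((c c\<^sup>*) (d d\<^sup>*))\<close> is the real inner product of the rank-one matrices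
  \<open>c c\<^sup>*\<close> and \<open>d d\<^sup>*\<close>, whose real coordinates are the \<^const>\<open>outer_coord\<close>s.\<close>
lemma qabs_inner_sq_eq_outer_coords:
  "(qabs (\<Sum>l<m. qcnj (c l) * d l))\<^sup>2
     = (\<Sum>\<beta>\<in>{..<m} \<times> {..<m} \<times> {..<4}. outer_coord \<beta> c * outer_coord \<beta> d)"
proof -
  define z where "z = (\<Sum>l<m. qcnj (c l) * d l)"
  have "(qabs z)\<^sup>2 = qRe (qcnj z * z)"
    by (simp add: qcnj_mult_self del: of_real_power)
  also have "qcnj z * z = (\<Sum>l<m. \<Sum>l'<m. qcnj (d l) * (c l * (qcnj (c l') * d l')))"
    by (simp add: z_def qcnj_sum sum_product mult.assoc)
  also have "qRe \<dots> = (\<Sum>l<m. \<Sum>l'<m. qRe (qcnj (d l) * (c l * (qcnj (c l') * d l'))))"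
    by (simp only: qRe_sum)
  also have "\<dots> = (\<Sum>l<m. \<Sum>l'<m. qRe (c l * qcnj (c l') * qcnj (d l * qcnj (d l'))))"
    by (simp only: qRe_mult_commute[of "qcnj (d _)"] mult.assoc qcnj_mult qcnj_qcnj)
  also have "\<dots> = (\<Sum>\<beta>\<in>{..<m} \<times> {..<m} \<times> {..<4}. outer_coord \<beta> c * outer_coord \<beta> d)"
    by (simp only: qRe_mult_qcnj_eq_coords) (simp add: outer_coord_def sum.cartesian_product split_def)
  finally show ?thesis
    by (simp add: z_def)
qed

lemma quat_psd_mult_abs_power:
  assumes psd: "quat_psd m K"
  shows "quat_psd m (\<lambda>p q. K p q * of_real (qabs (K p q) ^ (2 * k)))"
proof (induction k)
  case 0
  show ?case
    by (rule quat_psd_cong[OF psd]) simp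
next
  case (Suc k)
  obtain c where c: "\<And>p q. p < m \<Longrightarrow> q < m \<Longrightarrow> (\<Sum>l<m. qcnj (c p l) * c q l) = K p q"
    using quat_psd_gram_factorization[OF psd] by blast
  have "quat_psd m (\<lambda>p q. K p q * of_real (qabs (K p q) ^ (2 * k)) * of_real ((qabs (K p q))\<^sup>2))"
    by (rule quat_psd_mult_real_gram[OF Suc.IH, of "{..<m} \<times> {..<m} \<times> {..<4}" _ "\<lambda>\<beta> p. outer_coord \<beta> (c p)"])
      (simp_all flip: c add: qabs_inner_sq_eq_outer_coords)
  moreover have "qabs (K p q) ^ (2 * Suc k) = qabs (K p q) ^ (2 * k) * (qabs (K p q))\<^sup>2" for p q
    by (simp add: power_add power2_eq_square mult.commute)
  ultimately show ?case
    by (elim quat_psd_cong) (simp only: of_real_mult mult.assoc)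
qed

lemma quat_psd_mult_suminf:
  assumes psd: "quat_psd m K"
    and terms: "\<And>k. quat_psd m (\<lambda>p q. K p q * of_real (t k p q))"
    and summable: "\<And>p q. p < m \<Longrightarrow> q < m \<Longrightarrow> summable (\<lambda>k. t k p q)"
    and symmetric: "\<And>k p q. p < m \<Longrightarrow> q < m \<Longrightarrow> t k q p = t k p q"
  shows "quat_psd m (\<lambda>p q. K p q * of_real (\<Sum>k. t k p q))"
  unfolding quat_psd_def
proof (intro conjI allI impI)
  fix p q assume "p < m" "q < m"
  then have "(\<Sum>k. t k q p) = (\<Sum>k. t k p q)"
    using symmetric by simp
  then show "K q p * of_real (\<Sum>k. t k q p) = qcnj (K p q * of_real (\<Sum>k. t k p q))"
    using quat_psd_hermitian[OF psd \<open>p < m\<close> \<open>q < m\<close>] by (simp add: mult_of_real_quat)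
next
  fix \<xi> :: "nat \<Rightarrow> quat"
  define A where "A p q = qRe (qcnj (\<xi> p) * K p q * \<xi> q)" for p q
  have "qRe (quat_form m (\<lambda>p q. K p q * of_real (\<Sum>k. t k p q)) \<xi>) = (\<Sum>p<m. \<Sum>q<m. \<Sum>k. t k p q * A p q)"
    unfolding qRe_quat_form_mult_real A_def by (intro sum.cong refl) (simp add: suminf_mult2 summable)
  also have "\<dots> = (\<Sum>p<m. \<Sum>k. \<Sum>q<m. t k p q * A p q)"
    by (intro sum.cong refl suminf_sum[symmetric] summable_mult2 summable) auto
  also have "\<dots> = (\<Sum>k. \<Sum>p<m. \<Sum>q<m. t k p q * A p q)"
    by (intro suminf_sum[symmetric] summable_sum summable_mult2 summable) auto
  also have "\<dots> \<ge> 0"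
  proof (rule suminf_nonneg)
    show "summable (\<lambda>k. \<Sum>p<m. \<Sum>q<m. t k p q * A p q)"
      by (intro summable_sum summable_mult2 summable) auto
    show "0 \<le> (\<Sum>p<m. \<Sum>q<m. t k p q * A p q)" for k
      using quat_psd_form_nonneg[OF terms[of k], of \<xi>] by (simp add: qRe_quat_form_mult_real A_def)
  qed
  finally show "0 \<le> qRe (quat_form m (\<lambda>p q. K p q * of_real (\<Sum>k. t k p q)) \<xi>)" .
qed

lemma quat_psd_mult_power_series:
  assumes psd: "quat_psd m K" and diag: "\<And>p. p < m \<Longrightarrow> K p p = 1"
    and "summable w" and g: "\<And>k p. (g k p)\<^sup>2 \<le> w k"
  shows "quat_psd m (\<lambda>p q. K p q * of_real (\<Sum>k. g k p * g k q * qabs (K p q) ^ (2 * k)))"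
proof (rule quat_psd_mult_suminf[OF psd])
  fix k
  have "quat_psd m (\<lambda>p q. K p q * of_real (qabs (K p q) ^ (2 * k)) * of_real (g k p * g k q))"
    by (rule quat_psd_mult_real_gram[OF quat_psd_mult_abs_power[OF psd], of "{()}" _ "\<lambda>_. g k"]) simp_all
  then show "quat_psd m (\<lambda>p q. K p q * of_real (g k p * g k q * qabs (K p q) ^ (2 * k)))"
    by (elim quat_psd_cong) (simp add: mult_ac flip: of_real_mult del: of_real_power)
next
  fix p q assume "p < m" "q < m"
  have "\<bar>g k p * g k q * qabs (K p q) ^ (2 * k)\<bar> \<le> w k" for k
  proof -
    have "qabs (K p q) ^ (2 * k) \<le> 1"
      using quat_psd_unit_diag_abs_le_1[OF psd \<open>p < m\<close> \<open>q < m\<close> diag diag] \<open>p < m\<close> \<open>q < m\<close>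
      by (simp add: power_le_one qabs_nonneg)
    then have "\<bar>g k p * g k q * qabs (K p q) ^ (2 * k)\<bar> \<le> \<bar>g k p * g k q\<bar>"
      by (simp add: abs_mult qabs_nonneg mult_left_le)
    also have "\<dots> \<le> ((g k p)\<^sup>2 + (g k q)\<^sup>2) / 2"
      using sum_squares_bound[of "\<bar>g k p\<bar>" "\<bar>g k q\<bar>"] by (simp add: abs_mult)
    also have "\<dots> \<le> w k"
      using g[of k p] g[of k q] by simp
    finally show ?thesis .
  qed
  then show "summable (\<lambda>k. g k p * g k q * qabs (K p q) ^ (2 * k))"
    by (intro summable_comparison_test'[OF \<open>summable w\<close>]) simp
next
  fix k p q assume "p < m" "q < m"
  then show "g k q * g k p * qabs (K q p) ^ (2 * k) = g k p * g k q * qabs (K p q) ^ (2 * k)"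
    using quat_psd_hermitian[OF psd \<open>p < m\<close> \<open>q < m\<close>] by simp
qed

text \<open>Splitting \<open>a k = \<bar>a k\<bar> * sgn (a k)\<close> between the blocks \<open>p < n\<close> and \<open>p \<ge> n\<close> keeps every
  term psd (the real factor has rank one), while the off-diagonal block sees the coefficient \<open>a k\<close>.\<close>
lemma quat_psd_twisted_power_series:
  assumes psd: "quat_psd m K" and diag: "\<And>p. p < m \<Longrightarrow> K p p = 1"
    and "summable (\<lambda>k. \<bar>a k\<bar>)" and "(\<Sum>k. \<bar>a k\<bar>) = 1"
  obtains K' where "quat_psd m K'" and "\<And>p. p < m \<Longrightarrow> K' p p = 1"
    and "\<And>p q. p < n \<Longrightarrow> n \<le> q \<Longrightarrow> K' p q = K p q * of_real (\<Sum>k. a k * qabs (K p q) ^ (2 * k))"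
proof -
  define g where "g k p = sqrt \<bar>a k\<bar> * (if p < n then 1 else sgn (a k))" for k p
  define K' where "K' p q = K p q * of_real (\<Sum>k. g k p * g k q * qabs (K p q) ^ (2 * k))" for p q
  have g_sq: "g k p * g k p = \<bar>a k\<bar>" for k p
    by (auto simp: g_def sgn_if)
  then have "(g k p)\<^sup>2 \<le> \<bar>a k\<bar>" for k p
    by (simp add: power2_eq_square)
  from quat_psd_mult_power_series[OF psd diag assms(3) this] have "quat_psd m K'"
    unfolding K'_def .
  moreover have "K' p p = 1" if "p < m" for p
    using diag[OF that] assms(4) by (simp add: K'_def g_sq)
  moreover have "g k p * g k q = a k" if "p < n" "n \<le> q" for k p q
    using that by (simp add: g_def mult.assoc[symmetric] abs_mult_sgn)
  then have "K' p q = K p q * of_real (\<Sum>k. a k * qabs (K p q) ^ (2 * k))" if "p < n" "n \<le> q" for p q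
    using that by (simp add: K'_def)
  ultimately show thesis
    by (rule that)
qed

theorem mainTheorem16:
  fixes H :: "'v rqhs" and x y :: "nat \<Rightarrow> 'v" and n :: nat and a :: "nat \<Rightarrow> real"
  assumes "right_quat_hilbert_space H"
    and "\<forall>i\<in>{1..n}. unit_vec H (x i) \<and> unit_vec H (y i)"
    and "summable (\<lambda>i. \<bar>a i\<bar>)" and "(\<Sum>i. \<bar>a i\<bar>) = 1"
  shows "\<exists>(H' :: (nat \<Rightarrow> quat) rqhs) u v.
           right_quat_hilbert_space H' \<and>
           (\<forall>i\<in>{1..n}. unit_vec H' (u i) \<and> unit_vec H' (v i)) \<and>
           (\<forall>i\<in>{1..n}. \<forall>j\<in>{1..n}.
              qmul (vinner H (x i) (y j))
                   (qof_real (\<Sum>k. a k * (qabs (vinner H (x i) (y j))) ^ (2 * k)))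
              = vinner H' (u i) (v j))"
proof -
  have vs: "right_quat_vector_space H" and ip: "quat_inner_product H"
    using assms(1) unfolding right_quat_hilbert_space_def by auto
  define w where "w p = (if p < n then x (Suc p) else y (Suc (p - n)))" for p
  define K where "K p q = vinner H (w p) (w q)" for p q
  have w: "w p \<in> vcarrier H" "K p p = 1" if "p < 2 * n" for p
    using assms(2) that unfolding w_def K_def unit_vec_def quat_ops_eq by (cases "p < n"; force)+
  have "quat_psd (2 * n) K"
    unfolding K_def by (rule gram_matrix_quat_psd[OF vs ip w(1)])
  then obtain K' where psd: "quat_psd (2 * n) K'" and diag: "\<And>p. p < 2 * n \<Longrightarrow> K' p p = 1"
    and K': "\<And>p q. p < n \<Longrightarrow> n \<le> q \<Longrightarrow> K' p q = K p q * of_real (\<Sum>k. a k * qabs (K p q) ^ (2 * k))"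
    using quat_psd_twisted_power_series[where n = n] w(2) assms(3,4) by blast
  obtain u where u: "\<And>p. u p \<in> vcarrier (quat_space (2 * n))"
    and gram: "\<And>p q. p < 2 * n \<Longrightarrow> q < 2 * n \<Longrightarrow> vinner (quat_space (2 * n)) (u p) (u q) = K' p q"
    using quat_psd_is_gram_matrix[OF psd] by blast
  have unit: "unit_vec (quat_space (2 * n)) (u p)" if "p < 2 * n" for p
    using u gram[OF that that] diag[OF that] by (simp add: unit_vec_def quat_ops_eq)
  show ?thesis
  proof (rule exI[of _ "quat_space (2 * n)"], rule exI[of _ "\<lambda>i. u (i - 1)"],
      rule exI[of _ "\<lambda>j. u (n + (j - 1))"], intro conjI ballI)
    show "right_quat_hilbert_space (quat_space (2 * n))"
      by (rule quat_space_hilbert_space)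
  next
    fix i assume "i \<in> {1..n}"
    then show "unit_vec (quat_space (2 * n)) (u (i - 1))" "unit_vec (quat_space (2 * n)) (u (n + (i - 1)))"
      by (auto intro: unit)
  next
    fix i j assume "i \<in> {1..n}" "j \<in> {1..n}"
    then have lt: "i - 1 < 2 * n" "i - 1 < n" "n + (j - 1) < 2 * n"
      and xy: "w (i - 1) = x i" "w (n + (j - 1)) = y j"
      by (auto simp: w_def)
    show "qmul (vinner H (x i) (y j)) (qof_real (\<Sum>k. a k * qabs (vinner H (x i) (y j)) ^ (2 * k)))
        = vinner (quat_space (2 * n)) (u (i - 1)) (u (n + (j - 1)))"
      unfolding gram[OF lt(1,3)] K'[OF lt(2) le_add1] K_def xy quat_ops_eq ..
  qed
qed

end
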